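(* There is a weight-halving bijection from $[\mathcal{P}3_{o}\times\mathcal{P}3]_{\mathsf{even}}$ to $\mathcal{P}3_{o}\times\mathcal{P}3_{o}\times\mathcal{P}3\times\mathcal{P}3$. As a consequence, the numbers $P_{1^{-2}2^{1}4^{2}8^{-1}}(n)$ defined by $\sum_{n\ge0}P_{1^{-2}2^{1}4^{2}8^{-1}}(n)q^n=\frac{f_2f_4^2}{f_1^2f_8}$ form a $2$-convolutive sequence, i.e. $\sum_{n\ge0}P_{1^{-2}2^{1}4^{2}8^{-1}}(2n)q^n=\big(\sum_{n\ge0}P_{1^{-2}2^{1}4^{2}8^{-1}}(n)q^n\big)^2$.
   Context: A partition is a non-increasing finite sequence of positive integers (parts); its weight is the sum of its parts. $\mathcal{P}3$ denotes the set of partitions in which each part size occurs at most $3$ times, and $\mathcal{P}3_{o}$ the set of such partitions all of whose parts are odd. The weight of a tuple of partitions is the sum of the weights of its components. For a set $\mathcal{U}$ of weighted objects, $[\mathcal{U}]_{\mathsf{even}}$ is the subset of members of even weight. A bijection is weight-halving if the weight of the image is half the weight of the object. $f_i:=(q^i;q^i)_\infty=\prod_{k\ge1}(1-q^{ik})$. A sequence $(a_n)_{n\ge0}$ is $m$-convolutive if $\sum_{n\ge0}a_{mn}q^n=\big(\sum_{n\ge0}a_nq^n\big)^m$. *)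

theory Defs
  imports "HOL-Computational_Algebra.Formal_Power_Series"
begin

definition is_partition :: "nat list \<Rightarrow> bool" where
  "is_partition xs \<longleftrightarrow> sorted_wrt (\<lambda>a b. a \<ge> b) xs \<and> (\<forall>x\<in>set xs. 0 < x)"

definition weight :: "nat list \<Rightarrow> nat" where
  "weight xs = sum_list xs"

definition P3 :: "nat list set" where
  "P3 = {xs. is_partition xs \<and> (\<forall>k. count_list xs k \<le> 3)}"

definition P3o :: "nat list set" where
  "P3o = {xs. xs \<in> P3 \<and> (\<forall>x\<in>set xs. odd x)}"

text \<open>f_i = prod_{k>=1} (1 - q^(i k)) as a formal power series; its n-th coefficient
  agrees with that of the finite product over k = 1..n.\<close>
definition f_eta :: "nat \<Rightarrow> rat fps" where
  "f_eta i = Abs_fps (\<lambda>n. fps_nth (\<Prod>k\<in>{1..n}. (1 - fps_X ^ (i * k))) n)"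

definition GF :: "rat fps" where
  "GF = f_eta 2 * f_eta 4 ^ 2 / (f_eta 1 ^ 2 * f_eta 8)"

definition Pcoef :: "nat \<Rightarrow> rat" where
  "Pcoef n = fps_nth GF n"

end

(* Write f_i = (q^i; q^i)_oo and phi(q) = sum_{d in Z} q^(d^2).  Each admissible part size m
   contributes a factor 1 + q^m + q^2m + q^3m = (1 - q^4m)/(1 - q^m), so P3 and P3_o have
   generating functions f_4/f_1 and f_2 f_4/(f_1 f_8), and the pairs in P3_o x P3 are counted
   by GF = f_2 f_4^2/(f_1^2 f_8).  Gauss's identity
   phi(q) = f_2^5/(f_1^2 f_4^2) gives GF = phi(q) W(q^2) with W = f_2^4/(f_1^4 f_4); since the
   even-indexed coefficients of phi(q) form phi(q^2), those of GF form phi(q^2) W(q) = GF^2.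
   Hence for every n the pairs of weight 2n and the quadruples of weight n are equinumerous, and
   matching these finite fibres gives the weight-halving bijection.

   Gauss's identity comes from the finite triple product P_n(z) = prod_{k<n} (1 + q^(2k+1) z)
   (q^(2k+1) + z): its functional equation under z -> q^2 z shows that, up to order about n/2,
   the coefficient of z^(n+d) and of z^(n-d) is q^(d^2) times the middle one, which itself is
   1/(q^2; q^2)_n up to order 2n+1.  Evaluating at z = 1 yields
   (-q; q^2)_n^2 (q^2; q^2)_n = phi(q) up to that order.  Infinite products are handled
   through their truncations, which agree up to any fixed order. *)

theory Submission
  imports Defs "HOL-Computational_Algebra.Polynomial"
begin

unbundle fps_syntax

lemma prod_lessThan_double:
  "(\<Prod>k<2*n. f k) = (\<Prod>k<n. f (2*k)) * (\<Prod>k<n. f (2*k+1))"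
  for f :: "nat \<Rightarrow> 'a::comm_monoid_mult"
  by (induction n) (simp_all add: mult_ac)

lemma prod_lessThan_double_odd:
  "(\<Prod>k<2*n. if odd (Suc k) then f (Suc k) else 1) = (\<Prod>k<n. f (2*k+1))"
  for f :: "nat \<Rightarrow> 'a::comm_monoid_mult"
  by (simp add: prod_lessThan_double)

lemma sum_lessThan_add: "(\<Sum>i<a+b. f i) = (\<Sum>i<a. f i) + (\<Sum>i<b. f (a+i))"
  for f :: "nat \<Rightarrow> 'a::comm_monoid_add"
  by (induction b) (simp_all add: add.assoc)

lemma sum_atMost_double_centered:
  "(\<Sum>i\<le>2*n. f i) = f n + (\<Sum>j<n. f (n + Suc j) + f (n - Suc j))"
  for f :: "nat \<Rightarrow> 'a::comm_monoid_add"
proof -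
  have "(\<Sum>i\<le>2*n. f i) = (\<Sum>i<n. f i) + (\<Sum>i<Suc n. f (n+i))"
    by (simp add: lessThan_Suc_atMost[symmetric] mult_2 sum_lessThan_add flip: add_Suc_right)
  also have "(\<Sum>i<n. f i) = (\<Sum>i<n. f (n - Suc i))"
    by (rule sum.nat_diff_reindex[symmetric])
  also have "(\<Sum>i<Suc n. f (n+i)) = f n + (\<Sum>i<n. f (n + Suc i))"
    by (subst sum.lessThan_Suc_shift) simp
  finally show ?thesis
    by (simp add: sum.distrib add_ac)
qed

lemma sum_odd_lessThan: "(\<Sum>k<n. 2*k+1) = (n::nat)\<^sup>2"
  by (induction n) (simp_all add: power2_eq_square)

lemma prod_mult_telescope:
  fixes a b v :: "nat \<Rightarrow> 'a::comm_semiring_1"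
  assumes "\<And>j. j < d \<Longrightarrow> a j * v (Suc j) = x ^ (2*j+1) * (b j * v j)"
  shows "(\<Prod>j<d. a j) * v d = x ^ d\<^sup>2 * ((\<Prod>j<d. b j) * v 0)"
  using assms
proof (induction d)
  case 0
  then show ?case by simp
next
  case (Suc d)
  have "(\<Prod>j<Suc d. a j) * v (Suc d) = (\<Prod>j<d. a j) * (a d * v (Suc d))"
    by (simp add: mult_ac)
  also have "\<dots> = x ^ (2*d+1) * b d * ((\<Prod>j<d. a j) * v d)"
    using Suc.prems by (simp add: mult_ac)
  also have "\<dots> = x ^ (2*d+1+d\<^sup>2) * ((\<Prod>j<Suc d. b j) * v 0)"
    using Suc by (simp add: power_add mult_ac)
  also have "2*d+1+d\<^sup>2 = (Suc d)\<^sup>2"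
    by (simp add: power2_eq_square)
  finally show ?case .
qed

section \<open>Power series that agree up to a given order\<close>

definition fps_eq_upto :: "nat \<Rightarrow> 'a::zero fps \<Rightarrow> 'a fps \<Rightarrow> bool" where
  "fps_eq_upto N F G \<longleftrightarrow> (\<forall>n\<le>N. F $ n = G $ n)"

lemma fps_eq_upto_refl [simp]: "fps_eq_upto N F F"
  by (simp add: fps_eq_upto_def)

lemma fps_eq_upto_sym: "fps_eq_upto N F G \<Longrightarrow> fps_eq_upto N G F"
  by (simp add: fps_eq_upto_def)

lemma fps_eq_upto_trans [trans]:
  "fps_eq_upto N F G \<Longrightarrow> fps_eq_upto N G H \<Longrightarrow> fps_eq_upto N F H"
  by (simp add: fps_eq_upto_def)

lemma fps_eq_upto_imp_eq: "(\<And>N. fps_eq_upto N F G) \<Longrightarrow> F = G"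
  unfolding fps_eq_upto_def by (metis fps_ext order_refl)

lemma fps_eq_upto_add:
  "fps_eq_upto N F G \<Longrightarrow> fps_eq_upto N F' G' \<Longrightarrow> fps_eq_upto N (F + F') (G + G')"
  by (simp add: fps_eq_upto_def)

lemma fps_eq_upto_mult:
  fixes F G :: "'a::comm_semiring_0 fps"
  shows "fps_eq_upto N F G \<Longrightarrow> fps_eq_upto N F' G' \<Longrightarrow> fps_eq_upto N (F * F') (G * G')"
  unfolding fps_eq_upto_def fps_mult_nth by (auto intro!: sum.cong)

lemma fps_eq_upto_power:
  fixes F G :: "'a::comm_semiring_1 fps"
  shows "fps_eq_upto N F G \<Longrightarrow> fps_eq_upto N (F ^ k) (G ^ k)"
  by (induction k) (auto intro: fps_eq_upto_mult)

lemma fps_eq_upto_prod: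
  fixes F G :: "'b \<Rightarrow> 'a::comm_semiring_1 fps"
  shows "(\<And>i. i \<in> A \<Longrightarrow> fps_eq_upto N (F i) (G i)) \<Longrightarrow> fps_eq_upto N (prod F A) (prod G A)"
  by (induction A rule: infinite_finite_induct) (auto intro: fps_eq_upto_mult)

lemma fps_eq_upto_sum:
  fixes F G :: "'b \<Rightarrow> 'a::comm_monoid_add fps"
  shows "(\<And>i. i \<in> A \<Longrightarrow> fps_eq_upto N (F i) (G i)) \<Longrightarrow> fps_eq_upto N (sum F A) (sum G A)"
  by (induction A rule: infinite_finite_induct) (auto intro: fps_eq_upto_add)

lemma fps_eq_upto_X_power_mult:
  fixes F :: "'a::comm_ring_1 fps"
  shows "N < k \<Longrightarrow> fps_eq_upto N (fps_X ^ k * F) 0"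
  by (simp add: fps_eq_upto_def fps_X_power_mult_nth)

lemma fps_eq_upto_one_minus_X_power:
  "N < k \<Longrightarrow> fps_eq_upto N (1 - fps_X ^ k :: 'a::comm_ring_1 fps) 1"
  by (simp add: fps_eq_upto_def)

lemma fps_eq_upto_cancel:
  fixes A B v w :: "'a::field fps"
  assumes "A * v = fps_X ^ k * (B * w)" "fps_eq_upto N A 1" "k \<le> N \<Longrightarrow> fps_eq_upto N B 1"
  shows "fps_eq_upto N v (fps_X ^ k * w)"
proof (cases "N < k")
  case True
  have "A $ 0 = 1" using assms(2) by (simp add: fps_eq_upto_def)
  then have "v = fps_X ^ k * (inverse A * B * w)"
    using assms(1) by (metis inverse_mult_eq_1 mult.assoc mult.left_commute mult_1 one_neq_zero)
  then show ?thesis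
    using fps_eq_upto_X_power_mult[OF True] by (metis fps_eq_upto_sym fps_eq_upto_trans)
next
  case False
  have "fps_eq_upto N (1 * v) (A * v)"
    by (intro fps_eq_upto_mult fps_eq_upto_sym[OF assms(2)] fps_eq_upto_refl)
  also have "A * v = fps_X ^ k * (B * w)" by (fact assms(1))
  also have "fps_eq_upto N \<dots> (fps_X ^ k * (1 * w))"
    using False assms(3) by (intro fps_eq_upto_mult fps_eq_upto_refl) simp
  finally show ?thesis by simp
qed

lemma fps_compose_X_power_nth:
  fixes F :: "'a::comm_ring_1 fps"
  assumes "k \<ge> 1"
  shows "(F oo fps_X ^ k) $ n = (if k dvd n then F $ (n div k) else 0)"
proof -
  have "(F oo fps_X ^ k) $ n = (\<Sum>i=0..n. F $ i * (if n = k * i then 1 else 0))"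
    by (simp add: fps_compose_nth flip: power_mult)
  also have "\<dots> = (\<Sum>i=0..n. if i = n div k \<and> k dvd n then F $ i else 0)"
    using assms by (intro sum.cong) auto
  also have "\<dots> = (if k dvd n then F $ (n div k) else 0)"
    by (simp add: sum.delta')
  finally show ?thesis .
qed

lemma fps_eq_upto_compose_X_power:
  fixes F G :: "'a::comm_ring_1 fps"
  assumes "k \<ge> 1" "fps_eq_upto N F G"
  shows "fps_eq_upto N (F oo fps_X ^ k) (G oo fps_X ^ k)"
  unfolding fps_eq_upto_def
proof (intro allI impI)
  fix n assume "n \<le> N"
  then have "n div k \<le> N" using div_le_dividend order_trans by blast
  then show "(F oo fps_X ^ k) $ n = (G oo fps_X ^ k) $ n"
    using assms by (simp add: fps_eq_upto_def fps_compose_X_power_nth)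
qed

lemma fps_even_part_mult_compose_X_square:
  fixes A B :: "'a::idom fps"
  shows "Abs_fps (\<lambda>n. (A * (B oo fps_X\<^sup>2)) $ (2*n)) = Abs_fps (\<lambda>n. A $ (2*n)) * B"
proof -
  define E where "E = Abs_fps (\<lambda>n. A $ (2*n))"
  define Od where "Od = Abs_fps (\<lambda>n. A $ (2*n+1))"
  have "A = (E oo fps_X\<^sup>2) + fps_X * (Od oo fps_X\<^sup>2)"
  proof (rule fps_ext)
    fix j
    show "A $ j = ((E oo fps_X\<^sup>2) + fps_X * (Od oo fps_X\<^sup>2)) $ j"
      by (cases j) (auto simp: fps_compose_X_power_nth E_def Od_def elim: oddE)
  qed
  then have "A * (B oo fps_X\<^sup>2) = ((E * B) oo fps_X\<^sup>2) + fps_X * ((Od * B) oo fps_X\<^sup>2)"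
    by (simp add: fps_compose_mult_distrib algebra_simps)
  then show ?thesis
    by (intro fps_ext) (simp add: E_def fps_compose_X_power_nth)
qed

section \<open>The eta products\<close>

abbreviation q :: "rat fps" where "q \<equiv> fps_X"

definition f_eta_partial :: "nat \<Rightarrow> nat \<Rightarrow> rat fps" where
  "f_eta_partial i M = (\<Prod>k<M. 1 - q ^ (i * Suc k))"

lemma f_eta_partial_double:
  "f_eta_partial i (2*n) = (\<Prod>k<n. 1 - q ^ (i * (2*k+1))) * f_eta_partial (2*i) n"
  unfolding f_eta_partial_def prod_lessThan_double by (simp add: algebra_simps)

lemma f_eta_partial_eq_upto:
  assumes "i \<ge> 1" "N \<le> M"
  shows "fps_eq_upto N (f_eta_partial i M) (f_eta_partial i N)"
proof -
  have "fps_eq_upto N (1 - q ^ (i * Suc k)) 1" if "N \<le> k" for k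
  proof (rule fps_eq_upto_one_minus_X_power)
    have "Suc k \<le> i * Suc k" using assms(1) mult_le_mono1[of 1 i "Suc k"] by simp
    then show "N < i * Suc k" using that by linarith
  qed
  then have "fps_eq_upto N (\<Prod>k\<in>{N..<M}. 1 - q ^ (i * Suc k)) (\<Prod>k\<in>{N..<M}. 1)"
    by (intro fps_eq_upto_prod) simp
  then have "fps_eq_upto N (f_eta_partial i N * (\<Prod>k\<in>{N..<M}. 1 - q ^ (i * Suc k))) (f_eta_partial i N)"
    using fps_eq_upto_mult[OF fps_eq_upto_refl] by fastforce
  moreover have "f_eta_partial i N * (\<Prod>k\<in>{N..<M}. 1 - q ^ (i * Suc k)) = f_eta_partial i M"
    unfolding f_eta_partial_def lessThan_atLeast0 using assms(2) by (simp add: prod.atLeastLessThan_concat)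
  ultimately show ?thesis by simp
qed

lemma f_eta_eq_upto_partial:
  assumes "i \<ge> 1" "N \<le> M"
  shows "fps_eq_upto N (f_eta i) (f_eta_partial i M)"
proof -
  have f_eta_nth: "f_eta i $ n = f_eta_partial i n $ n" for n
  proof -
    have "{1..n} = Suc ` {..<n}" by (simp add: lessThan_atLeast0 atLeastLessThanSuc_atLeastAtMost image_Suc_atLeastLessThan)
    then show ?thesis by (simp add: f_eta_def f_eta_partial_def prod.reindex)
  qed
  show ?thesis
    unfolding fps_eq_upto_def
  proof (intro allI impI)
    fix n assume "n \<le> N"
    then have "fps_eq_upto n (f_eta_partial i M) (f_eta_partial i n)"
      using assms by (intro f_eta_partial_eq_upto) auto
    then show "f_eta i $ n = f_eta_partial i M $ n" by (simp add: f_eta_nth fps_eq_upto_def)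
  qed
qed

lemma f_eta_nth_0 [simp]: "f_eta i $ 0 = 1"
  by (simp add: f_eta_def)

lemma f_eta_mult_inverse [simp]: "f_eta i * inverse (f_eta i) = 1"
  by (simp add: inverse_mult_eq_1')

lemma f_eta_compose_X_power:
  assumes "k \<ge> 1" "i \<ge> 1"
  shows "f_eta i oo q ^ k = f_eta (k * i)"
proof (rule fps_eq_upto_imp_eq)
  fix N
  have "fps_eq_upto N (f_eta i oo q ^ k) (f_eta_partial i N oo q ^ k)"
    using assms by (intro fps_eq_upto_compose_X_power f_eta_eq_upto_partial) simp_all
  also have "f_eta_partial i N oo q ^ k = f_eta_partial (k * i) N"
    using assms(1) unfolding f_eta_partial_def
    by (simp add: fps_compose_prod_distrib fps_compose_sub_distrib fps_X_power_compose
        flip: power_mult) (simp add: algebra_simps)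
  also have "fps_eq_upto N \<dots> (f_eta (k * i))"
    using assms by (intro fps_eq_upto_sym[OF f_eta_eq_upto_partial]) simp_all
  finally show "fps_eq_upto N (f_eta i oo q ^ k) (f_eta (k * i))" .
qed

lemma f_eta_compose_X_square: "i \<ge> 1 \<Longrightarrow> f_eta i oo q\<^sup>2 = f_eta (2*i)"
  by (rule f_eta_compose_X_power) simp_all

lemma inverse_f_eta_compose_X_square: "i \<ge> 1 \<Longrightarrow> inverse (f_eta i) oo q\<^sup>2 = inverse (f_eta (2*i))"
  by (simp add: fps_inverse_compose f_eta_compose_X_square)

section \<open>Gauss's identity via a finite triple product\<close>

definition triple_poly :: "nat \<Rightarrow> rat fps poly" where
  "triple_poly n = (\<Prod>k<n. [:1, q ^ (2*k+1):] * [:q ^ (2*k+1), 1:])"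

lemma triple_poly_Suc: "triple_poly (Suc n) = triple_poly n * [:1, q ^ (2*n+1):] * [:q ^ (2*n+1), 1:]"
  unfolding triple_poly_def by (simp only: prod.lessThan_Suc mult.assoc)

lemma degree_triple_poly: "degree (triple_poly n) = 2*n"
  unfolding triple_poly_def by (subst degree_prod_eq_sum_degree) (auto simp: degree_mult_eq)

lemma lead_coeff_triple_poly: "lead_coeff (triple_poly n) = q ^ n\<^sup>2"
  unfolding triple_poly_def lead_coeff_prod
  by (simp add: lead_coeff_mult power_sum flip: sum_odd_lessThan)

lemma poly_triple_poly_1: "poly (triple_poly n) 1 = (\<Prod>k<n. 1 + q ^ (2*k+1))\<^sup>2"
  unfolding triple_poly_def poly_prod power2_eq_square prod.distrib[symmetric]
  by (intro prod.cong) (simp_all add: algebra_simps)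

lemma triple_poly_functional_eq:
  "pcompose (triple_poly n) [:0, q\<^sup>2:] * [:q ^ (2*n), q:] = smult (q ^ (2*n)) ([:1, q ^ (2*n+1):] * triple_poly n)"
proof (induction n)
  case 0
  show ?case by (simp add: triple_poly_def pcompose_1)
next
  case (Suc n)
  define P where "P = triple_poly n"
  define Pc where "Pc = pcompose P [:0, q\<^sup>2:]"
  define a where "a = q ^ (2*n+1)"
  define b where "b = q ^ (2 * Suc n + 1)"
  have "pcompose [:1, a:] [:0, q\<^sup>2:] = [:1, b:]"
    by (simp add: a_def b_def pcompose_pCons power_add power2_eq_square mult_ac)
  moreover have "pcompose [:a, 1:] [:0, q\<^sup>2:] = smult q [:q ^ (2*n), q:]"
    by (simp add: a_def pcompose_pCons power2_eq_square)
  moreover have "[:q ^ (2 * Suc n), q:] = smult q [:a, 1:]"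
    by (simp add: a_def)
  ultimately have "pcompose (triple_poly (Suc n)) [:0, q\<^sup>2:] * [:q ^ (2 * Suc n), q:]
      = Pc * [:1, b:] * smult q [:q ^ (2*n), q:] * smult q [:a, 1:]"
    by (simp only: triple_poly_Suc pcompose_mult P_def Pc_def a_def)
  also have "\<dots> = smult (q * q) ([:1, b:] * [:a, 1:] * (Pc * [:q ^ (2*n), q:]))"
    by (simp only: mult_smult_left mult_smult_right smult_smult mult_ac)
  also have "\<dots> = smult (q * q * q ^ (2*n)) ([:1, b:] * (P * [:1, a:] * [:a, 1:]))"
    using Suc.IH by (simp only: P_def Pc_def a_def mult_smult_left mult_smult_right smult_smult mult_ac)
  also have "q * q * q ^ (2*n) = q ^ (2 * Suc n)"
    by (simp add: power2_eq_square)
  finally show ?case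
    by (simp only: P_def a_def b_def triple_poly_Suc)
qed

lemma coeff_triple_poly_recurrence:
  "q ^ (2*n) * (q ^ (2 * Suc i) * coeff (triple_poly n) (Suc i)) + q ^ (2*i+1) * coeff (triple_poly n) i
     = q ^ (2*n) * coeff (triple_poly n) (Suc i) + q ^ (4*n+1) * coeff (triple_poly n) i"
proof -
  define c where "c = coeff (triple_poly n)"
  have "coeff (pcompose (triple_poly n) [:0, q\<^sup>2:] * [:q ^ (2*n), q:]) (Suc i)
      = coeff (smult (q ^ (2*n)) ([:1, q ^ (2*n+1):] * triple_poly n)) (Suc i)"
    by (simp only: triple_poly_functional_eq)
  then have "q ^ (2*n) * ((q\<^sup>2) ^ Suc i * c (Suc i)) + q * ((q\<^sup>2) ^ i * c i)
      = q ^ (2*n) * (c (Suc i) + q ^ (2*n+1) * c i)"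
    by (simp add: c_def coeff_pcompose_linear mult_pCons_right mult_pCons_left coeff_pCons)
  moreover have "(q\<^sup>2) ^ Suc i = q ^ (2 * Suc i)"
    by (simp only: power_mult)
  moreover have "q * ((q\<^sup>2) ^ i * c i) = q ^ (2*i+1) * c i"
    by (simp add: mult_ac flip: power_mult)
  moreover have "q ^ (2*n) * (c (Suc i) + q ^ (2*n+1) * c i) = q ^ (2*n) * c (Suc i) + q ^ (4*n+1) * c i"
    by (simp add: algebra_simps flip: power_add)
  ultimately show ?thesis
    by (simp only: c_def)
qed

lemma coeff_triple_poly_ratio:
  assumes "i \<le> 2*n"
  shows "q ^ (2*n) * ((1 - q ^ (2 * Suc i)) * coeff (triple_poly n) (Suc i))
           = q ^ (2*i+1) * ((1 - q ^ (4*n - 2*i)) * coeff (triple_poly n) i)"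
proof -
  have "q ^ (4*n+1) = q ^ (2*i+1) * q ^ (4*n - 2*i)"
    using assms by (simp flip: power_add)
  then show ?thesis
    using coeff_triple_poly_recurrence[of n i] by (simp add: algebra_simps)
qed

lemma coeff_triple_poly_above:
  assumes "m < n"
  shows "(1 - q ^ (2*n+2*m+2)) * coeff (triple_poly n) (n+m+1)
           = q ^ (2*m+1) * ((1 - q ^ (2*n-2*m)) * coeff (triple_poly n) (n+m))"
proof -
  have "q ^ (2*n) * ((1 - q ^ (2*n+2*m+2)) * coeff (triple_poly n) (n+m+1))
      = q ^ (2*n) * (q ^ (2*m+1) * ((1 - q ^ (2*n-2*m)) * coeff (triple_poly n) (n+m)))"
    using coeff_triple_poly_ratio[of "n+m" n] assms
    by (simp add: power_add algebra_simps)
  then show ?thesis by simp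
qed

lemma coeff_triple_poly_below:
  assumes "m < n"
  shows "(1 - q ^ (2*n+2*m+2)) * coeff (triple_poly n) (n-m-1)
           = q ^ (2*m+1) * ((1 - q ^ (2*n-2*m)) * coeff (triple_poly n) (n-m))"
proof -
  define r where "r = n - m - 1"
  have n: "n = r + m + 1" using assms by (simp add: r_def)
  have "q ^ (2*n) * ((1 - q ^ (2 * Suc r)) * coeff (triple_poly n) (Suc r))
      = q ^ (2*r+1) * ((1 - q ^ (4*n - 2*r)) * coeff (triple_poly n) r)"
    using n by (intro coeff_triple_poly_ratio) simp
  moreover have "2 * Suc r = 2*n - 2*m" "4*n - 2*r = 2*n+2*m+2"
    using n by simp_all
  moreover have "q ^ (2*n) = q ^ (2*r+1) * q ^ (2*m+1)"
    by (simp add: n flip: power_add)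
  ultimately have "q ^ (2*r+1) * (q ^ (2*m+1) * ((1 - q ^ (2*n-2*m)) * coeff (triple_poly n) (Suc r)))
      = q ^ (2*r+1) * ((1 - q ^ (2*n+2*m+2)) * coeff (triple_poly n) r)"
    by (simp only: mult.assoc)
  then have "q ^ (2*m+1) * ((1 - q ^ (2*n-2*m)) * coeff (triple_poly n) (Suc r))
      = (1 - q ^ (2*n+2*m+2)) * coeff (triple_poly n) r"
    by (subst (asm) mult_left_cancel) simp_all
  moreover have "n - m - 1 = r" "n - m = Suc r"
    using assms by (simp_all add: r_def)
  ultimately show ?thesis
    by metis
qed

lemma coeff_triple_poly_telescoped:
  assumes "d \<le> n" "k = n + d \<or> k = n - d"
  shows "(\<Prod>j<d. 1 - q ^ (2*n+2*j+2)) * coeff (triple_poly n) k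
           = q ^ d\<^sup>2 * ((\<Prod>j<d. 1 - q ^ (2*n-2*j)) * coeff (triple_poly n) n)"
  using assms(2)
proof
  assume "k = n + d"
  then show ?thesis
    using prod_mult_telescope[of d "\<lambda>j. 1 - q ^ (2*n+2*j+2)" "\<lambda>j. coeff (triple_poly n) (n+j)" q]
      coeff_triple_poly_above[of _ n] assms(1) by simp
next
  assume "k = n - d"
  then show ?thesis
    using prod_mult_telescope[of d "\<lambda>j. 1 - q ^ (2*n+2*j+2)" "\<lambda>j. coeff (triple_poly n) (n-j)" q]
      coeff_triple_poly_below[of _ n] assms(1) by (simp add: Suc_diff_Suc)
qed

lemma coeff_triple_poly_middle:
  "(\<Prod>j<n. 1 - q ^ (2*n+2*j+2)) = f_eta_partial 2 n * coeff (triple_poly n) n"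
proof -
  have "(\<Prod>j<n. 1 - q ^ (2*n-2*j)) = f_eta_partial 2 n"
    unfolding f_eta_partial_def
    by (subst prod.nat_diff_reindex[symmetric]) (intro prod.cong; simp add: Suc_diff_Suc)
  moreover have "coeff (triple_poly n) (n+n) = q ^ n\<^sup>2"
    using lead_coeff_triple_poly[of n] by (simp add: degree_triple_poly mult_2)
  ultimately show ?thesis
    using coeff_triple_poly_telescoped[of n n "n+n"] by (simp add: mult.commute)
qed

lemma coeff_triple_poly_near_middle:
  assumes "2*N \<le> n" "d \<le> n" "k = n + d \<or> k = n - d"
  shows "fps_eq_upto N (coeff (triple_poly n) k) (q ^ d\<^sup>2 * coeff (triple_poly n) n)"
proof (rule fps_eq_upto_cancel)
  show "(\<Prod>j<d. 1 - q ^ (2*n+2*j+2)) * coeff (triple_poly n) k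
      = q ^ d\<^sup>2 * ((\<Prod>j<d. 1 - q ^ (2*n-2*j)) * coeff (triple_poly n) n)"
    using assms(2,3) by (rule coeff_triple_poly_telescoped)
  have "fps_eq_upto N (\<Prod>j<d. 1 - q ^ (2*n+2*j+2)) (\<Prod>j<d. 1)"
    using assms(1) by (intro fps_eq_upto_prod fps_eq_upto_one_minus_X_power) simp
  then show "fps_eq_upto N (\<Prod>j<d. 1 - q ^ (2*n+2*j+2)) 1"
    by simp
  assume "d\<^sup>2 \<le> N"
  then have "d \<le> N"
    using le_square[of d] unfolding power2_eq_square by linarith
  then have "fps_eq_upto N (\<Prod>j<d. 1 - q ^ (2*n-2*j)) (\<Prod>j<d. 1)"
    using assms(1) by (intro fps_eq_upto_prod fps_eq_upto_one_minus_X_power) auto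
  then show "fps_eq_upto N (\<Prod>j<d. 1 - q ^ (2*n-2*j)) 1"
    by simp
qed

(* Ramanujan's phi(q) = sum_{d in Z} q^(d^2): every nonzero square arises from d and -d *)
definition theta3 :: "rat fps" where
  "theta3 = Abs_fps (\<lambda>m. if m = 0 then 1 else if \<exists>d. m = d\<^sup>2 then 2 else 0)"

lemma theta3_eq_upto_partial_sum:
  assumes "N \<le> n"
  shows "fps_eq_upto N theta3 (1 + 2 * (\<Sum>j<n. q ^ (Suc j)\<^sup>2))"
  unfolding fps_eq_upto_def
proof (intro allI impI)
  fix m assume "m \<le> N"
  have sum_nth: "(\<Sum>j<n. q ^ (Suc j)\<^sup>2) $ m = (\<Sum>j<n. if m = (Suc j)\<^sup>2 then 1 else 0)"
    by (simp add: fps_sum_nth)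
  consider (square) d where "m = (Suc d)\<^sup>2" | (non_square) "\<forall>d. m \<noteq> (Suc d)\<^sup>2"
    by blast
  then show "theta3 $ m = (1 + 2 * (\<Sum>j<n. q ^ (Suc j)\<^sup>2)) $ m"
  proof cases
    case square
    have "Suc d \<le> m"
      using square le_square[of "Suc d"] by (simp add: power2_eq_square)
    then have "d < n" using \<open>m \<le> N\<close> assms by simp
    have "(\<Sum>j<n. q ^ (Suc j)\<^sup>2) $ m = (\<Sum>j<n. if j = d then 1 else 0)"
      unfolding sum_nth using square by (intro sum.cong) (auto simp: power2_eq_iff_nonneg)
    also have "\<dots> = 1"
      using \<open>d < n\<close> by simp
    finally show ?thesis
      using square by (simp add: theta3_def numeral_fps_const)
  next
    case non_square
    have "m = 0" if "m = d\<^sup>2" for d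
      using non_square that by (cases d) auto
    then show ?thesis
      using non_square by (auto simp: theta3_def sum_nth numeral_fps_const)
  qed
qed

lemma odd_prod_square_eq_upto:
  assumes "2*N \<le> n"
  shows "fps_eq_upto N ((\<Prod>k<n. 1 + q ^ (2*k+1))\<^sup>2)
           (coeff (triple_poly n) n * (1 + 2 * (\<Sum>j<n. q ^ (Suc j)\<^sup>2)))"
proof -
  let ?c = "coeff (triple_poly n)"
  have "(\<Prod>k<n. 1 + q ^ (2*k+1))\<^sup>2 = poly (triple_poly n) 1"
    by (rule poly_triple_poly_1 [symmetric])
  also have "\<dots> = (\<Sum>i\<le>2*n. ?c i)"
    by (simp add: poly_altdef degree_triple_poly)
  also have "\<dots> = ?c n + (\<Sum>j<n. ?c (n + Suc j) + ?c (n - Suc j))"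
    by (rule sum_atMost_double_centered)
  also have "fps_eq_upto N \<dots> (?c n + (\<Sum>j<n. q ^ (Suc j)\<^sup>2 * ?c n + q ^ (Suc j)\<^sup>2 * ?c n))"
    using assms
    by (intro fps_eq_upto_add fps_eq_upto_sum fps_eq_upto_refl coeff_triple_poly_near_middle) auto
  also have "\<dots> = ?c n * (1 + 2 * (\<Sum>j<n. q ^ (Suc j)\<^sup>2))"
    by (simp add: algebra_simps sum_distrib_left sum.distrib flip: mult_2)
  finally show ?thesis .
qed

lemma odd_prod_f_eta_partial:
  "(\<Prod>k<n. 1 + q ^ (2*k+1)) * f_eta_partial 1 (2*n) * f_eta_partial 4 n
     = f_eta_partial 2 (2*n) * f_eta_partial 2 n"
proof -
  let ?D = "\<Prod>k<n. 1 + q ^ (2*k+1)"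
  have "(1 + q ^ (2*k+1)) * (1 - q ^ (2*k+1)) = 1 - q ^ (2 * (2*k+1))" for k
  proof -
    have "(1 + a) * (1 - a) = 1 - a * a" for a :: "rat fps"
      by (simp add: algebra_simps)
    then show ?thesis
      by (simp only: mult_2 power_add)
  qed
  then have odd: "?D * (\<Prod>k<n. 1 - q ^ (2*k+1)) = (\<Prod>k<n. 1 - q ^ (2 * (2*k+1)))"
    by (simp only: prod.distrib [symmetric])
  have "f_eta_partial 1 (2*n) = (\<Prod>k<n. 1 - q ^ (2*k+1)) * f_eta_partial 2 n"
    using f_eta_partial_double[of 1 n] by simp
  then have "?D * f_eta_partial 1 (2*n) * f_eta_partial 4 n
      = ?D * (\<Prod>k<n. 1 - q ^ (2*k+1)) * (f_eta_partial 4 n * f_eta_partial 2 n)"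
    by (simp only: mult_ac)
  also have "\<dots> = f_eta_partial 2 (2*n) * f_eta_partial 2 n"
    unfolding odd using f_eta_partial_double[of 2 n] by (simp add: mult.assoc)
  finally show ?thesis .
qed

theorem theta3_f_eta: "theta3 * f_eta 1 ^ 2 * f_eta 4 ^ 2 = f_eta 2 ^ 5"
proof (rule fps_eq_upto_imp_eq)
  fix N :: nat
  define n where "n = 2*N+1"
  let ?c = "coeff (triple_poly n) n" and ?D = "\<Prod>k<n. 1 + q ^ (2*k+1)"
  define F where "F = f_eta_partial 1 (2*n) ^ 2 * f_eta_partial 4 n ^ 2"
  have "fps_eq_upto N (\<Prod>j<n. 1 - q ^ (2*n+2*j+2)) (\<Prod>j<n. 1)"
    by (intro fps_eq_upto_prod fps_eq_upto_one_minus_X_power) (simp add: n_def)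
  then have middle: "fps_eq_upto N (f_eta_partial 2 n * ?c) 1"
    by (simp only: coeff_triple_poly_middle prod.neutral_const)
  have "fps_eq_upto N (theta3 * f_eta 1 ^ 2 * f_eta 4 ^ 2)
      ((1 + 2 * (\<Sum>j<n. q ^ (Suc j)\<^sup>2)) * 1 * F)"
    unfolding F_def mult.assoc mult_1 n_def
    by (intro fps_eq_upto_mult fps_eq_upto_power theta3_eq_upto_partial_sum f_eta_eq_upto_partial) simp_all
  also have "fps_eq_upto N \<dots> ((1 + 2 * (\<Sum>j<n. q ^ (Suc j)\<^sup>2)) * (f_eta_partial 2 n * ?c) * F)"
    by (intro fps_eq_upto_mult fps_eq_upto_refl fps_eq_upto_sym[OF middle])
  also have "\<dots> = (?c * (1 + 2 * (\<Sum>j<n. q ^ (Suc j)\<^sup>2))) * (f_eta_partial 2 n * F)"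
    by (simp add: mult_ac)
  also have "fps_eq_upto N \<dots> (?D\<^sup>2 * (f_eta_partial 2 n * F))"
    by (intro fps_eq_upto_mult fps_eq_upto_refl fps_eq_upto_sym[OF odd_prod_square_eq_upto])
      (simp add: n_def)
  also have "?D\<^sup>2 * (f_eta_partial 2 n * F) = f_eta_partial 2 n * (?D * f_eta_partial 1 (2*n) * f_eta_partial 4 n)\<^sup>2"
    by (simp add: F_def power_mult_distrib mult_ac)
  also have "\<dots> = f_eta_partial 2 n * (f_eta_partial 2 (2*n) * f_eta_partial 2 n)\<^sup>2"
    by (simp only: odd_prod_f_eta_partial)
  also have "fps_eq_upto N \<dots> (f_eta 2 * (f_eta 2 * f_eta 2)\<^sup>2)"
    by (intro fps_eq_upto_mult fps_eq_upto_power fps_eq_upto_sym[OF f_eta_eq_upto_partial])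
      (simp_all add: n_def)
  also have "f_eta 2 * (f_eta 2 * f_eta 2)\<^sup>2 = f_eta 2 ^ 5"
    by (simp add: power_mult_distrib numeral_eq_Suc mult_ac)
  finally show "fps_eq_upto N (theta3 * f_eta 1 ^ 2 * f_eta 4 ^ 2) (f_eta 2 ^ 5)" .
qed

section \<open>The even part of the generating function\<close>

lemma GF_f_eta_product: "GF = f_eta 2 * f_eta 4 ^ 2 * inverse (f_eta 1) ^ 2 * inverse (f_eta 8)"
  unfolding GF_def by (simp add: fps_divide_unit fps_inverse_mult fps_inverse_power mult.assoc)

lemma theta3_f_eta_product: "theta3 = f_eta 2 ^ 5 * inverse (f_eta 1) ^ 2 * inverse (f_eta 4) ^ 2"
proof -
  have "theta3 = theta3 * (f_eta 1 * inverse (f_eta 1))\<^sup>2 * (f_eta 4 * inverse (f_eta 4))\<^sup>2"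
    by simp
  also have "\<dots> = (theta3 * f_eta 1 ^ 2 * f_eta 4 ^ 2) * inverse (f_eta 1) ^ 2 * inverse (f_eta 4) ^ 2"
    by (simp only: power_mult_distrib mult_ac)
  finally show ?thesis
    by (simp only: theta3_f_eta)
qed

lemma theta3_even_part: "Abs_fps (\<lambda>n. theta3 $ (2*n)) = theta3 oo q\<^sup>2"
proof (rule fps_ext)
  fix n
  have "(\<exists>d::nat. 2*n = d\<^sup>2) \<longleftrightarrow> even n \<and> (\<exists>e::nat. n div 2 = e\<^sup>2)"
  proof
    assume "\<exists>d. 2*n = d\<^sup>2"
    then obtain d where d: "2*n = d\<^sup>2" by blast
    then have "even d" by (metis dvd_triv_left even_power)
    then show "even n \<and> (\<exists>e. n div 2 = e\<^sup>2)"
      using d by (auto simp: power2_eq_square elim!: evenE)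
  next
    assume "even n \<and> (\<exists>e. n div 2 = e\<^sup>2)"
    then obtain e where "n = 2 * e\<^sup>2" by auto
    then show "\<exists>d. 2*n = d\<^sup>2"
      by (intro exI[of _ "2*e"]) (simp add: power2_eq_square)
  qed
  then show "Abs_fps (\<lambda>n. theta3 $ (2*n)) $ n = (theta3 oo q\<^sup>2) $ n"
    by (auto simp: fps_compose_X_power_nth theta3_def)
qed

lemma GF_even_part: "Abs_fps (\<lambda>n. GF $ (2*n)) = GF\<^sup>2"
proof -
  define W where "W = f_eta 2 ^ 4 * inverse (f_eta 1) ^ 4 * inverse (f_eta 4)"
  have W_compose: "W oo q\<^sup>2 = f_eta 4 ^ 4 * inverse (f_eta 2) ^ 4 * inverse (f_eta 8)"
    by (simp add: W_def fps_compose_mult_distrib f_eta_compose_X_square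
        inverse_f_eta_compose_X_square flip: fps_compose_power)
  have GF_split: "GF = theta3 * (W oo q\<^sup>2)"
    unfolding W_compose theta3_f_eta_product GF_f_eta_product
    using f_eta_mult_inverse[of 2] f_eta_mult_inverse[of 4] by algebra
  have "Abs_fps (\<lambda>n. GF $ (2*n)) = Abs_fps (\<lambda>n. theta3 $ (2*n)) * W"
    unfolding GF_split by (rule fps_even_part_mult_compose_X_square)
  also have "\<dots> = (theta3 oo q\<^sup>2) * W"
    by (simp only: theta3_even_part)
  also have "\<dots> = f_eta 4 ^ 5 * inverse (f_eta 2) ^ 2 * inverse (f_eta 8) ^ 2 * W"
    unfolding theta3_f_eta_product
    by (simp add: fps_compose_mult_distrib f_eta_compose_X_square inverse_f_eta_compose_X_square
        flip: fps_compose_power)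
  also have "\<dots> = GF\<^sup>2"
    unfolding W_def GF_f_eta_product
    using f_eta_mult_inverse[of 2] f_eta_mult_inverse[of 4] by algebra
  finally show ?thesis .
qed

section \<open>Generating functions of weighted sets\<close>

definition gen_fun :: "'b set \<Rightarrow> ('b \<Rightarrow> nat) \<Rightarrow> 'a::semiring_1 fps" where
  "gen_fun A w = Abs_fps (\<lambda>n. of_nat (card {x\<in>A. w x = n}))"

definition finite_fibres :: "'b set \<Rightarrow> ('b \<Rightarrow> nat) \<Rightarrow> bool" where
  "finite_fibres A w \<longleftrightarrow> (\<forall>n. finite {x\<in>A. w x = n})"

lemma finite_fibres_subset:
  assumes "finite_fibres B w" "A \<subseteq> B"
  shows "finite_fibres A w"
  unfolding finite_fibres_def
proof
  fix n
  have "{x\<in>A. w x = n} \<subseteq> {x\<in>B. w x = n}" using assms(2) by blast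
  then show "finite {x\<in>A. w x = n}"
    using assms(1) finite_subset unfolding finite_fibres_def by blast
qed

lemma fibre_Times:
  "{p\<in>A \<times> B. (case p of (x, y) \<Rightarrow> wA x + wB y) = n}
     = (\<Union>i\<in>{0..n}. {x\<in>A. wA x = i} \<times> {y\<in>B. wB y = n - i})"
  for wA :: "'a \<Rightarrow> nat" and wB :: "'b \<Rightarrow> nat"
  by auto

lemma finite_fibres_Times:
  "finite_fibres A wA \<Longrightarrow> finite_fibres B wB \<Longrightarrow> finite_fibres (A \<times> B) (\<lambda>(x, y). wA x + wB y)"
  unfolding finite_fibres_def fibre_Times by blast

lemma gen_fun_Times:
  assumes "finite_fibres A wA" "finite_fibres B wB"
  shows "(gen_fun (A \<times> B) (\<lambda>(x, y). wA x + wB y) :: 'a::comm_semiring_1 fps)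
           = gen_fun A wA * gen_fun B wB"
proof (rule fps_ext)
  fix n
  have "card {p\<in>A \<times> B. (case p of (x, y) \<Rightarrow> wA x + wB y) = n}
      = (\<Sum>i\<in>{0..n}. card ({x\<in>A. wA x = i} \<times> {y\<in>B. wB y = n - i}))"
    unfolding fibre_Times using assms by (intro card_UN_disjoint) (auto simp: finite_fibres_def)
  then show "gen_fun (A \<times> B) (\<lambda>(x, y). wA x + wB y) $ n = (gen_fun A wA * gen_fun B wB :: 'a fps) $ n"
    by (simp add: gen_fun_def fps_mult_nth card_cartesian_product)
qed

lemma gen_fun_bij_betw:
  assumes "bij_betw f A B" "\<And>x. x \<in> A \<Longrightarrow> wB (f x) = wA x"
  shows "gen_fun B wB = gen_fun A wA"
proof -
  have "card {y\<in>B. wB y = n} = card {x\<in>A. wA x = n}" for n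
  proof -
    have "bij_betw f {x\<in>A. wA x = n} {y\<in>B. wB y = n}"
      using assms bij_betw_imp_surj_on[OF assms(1)]
      by (auto simp: bij_betw_def inj_on_def)
    then show ?thesis by (simp add: bij_betw_same_card)
  qed
  then show ?thesis by (simp add: gen_fun_def)
qed

lemma gen_fun_finite:
  fixes A :: "'b set"
  assumes "finite A"
  shows "(gen_fun A w :: 'a::semiring_1 fps) = (\<Sum>x\<in>A. fps_X ^ w x)"
proof (rule fps_ext)
  fix n
  have "of_nat (card {x\<in>A. w x = n}) = (\<Sum>x\<in>{x\<in>A. w x = n}. 1 :: 'a)"
    by simp
  also have "\<dots> = (\<Sum>x\<in>A. if w x = n then 1 else 0)"
    using assms by (rule sum.inter_filter)
  finally show "gen_fun A w $ n = (\<Sum>x\<in>A. fps_X ^ w x :: 'a fps) $ n"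
    by (simp add: gen_fun_def fps_sum_nth eq_commute)
qed

lemma fps_eq_upto_gen_fun:
  assumes "\<And>x. w x \<le> N \<Longrightarrow> x \<in> A \<longleftrightarrow> x \<in> B"
  shows "fps_eq_upto N (gen_fun A w) (gen_fun B w)"
proof -
  have "{x\<in>A. w x = n} = {x\<in>B. w x = n}" if "n \<le> N" for n
    using assms that by auto
  then show ?thesis by (simp add: fps_eq_upto_def gen_fun_def)
qed

lemma exists_weight_preserving_bij:
  fixes f :: "'a \<Rightarrow> nat" and g :: "'b \<Rightarrow> nat"
  assumes "finite_fibres A f" "finite_fibres B g"
    and "\<And>n. card {x\<in>A. f x = n} = card {y\<in>B. g y = n}"
  shows "\<exists>\<phi>. bij_betw \<phi> A B \<and> (\<forall>x\<in>A. g (\<phi> x) = f x)"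
proof -
  have "\<forall>n. \<exists>h. bij_betw h {x\<in>A. f x = n} {y\<in>B. g y = n}"
    using assms finite_same_card_bij unfolding finite_fibres_def by blast
  then obtain h where h: "\<And>n. bij_betw (h n) {x\<in>A. f x = n} {y\<in>B. g y = n}"
    by metis
  define \<phi> where "\<phi> x = h (f x) x" for x
  have weight_\<phi>: "\<phi> x \<in> B \<and> g (\<phi> x) = f x" if "x \<in> A" for x
    using bij_betwE[OF h[of "f x"]] that by (auto simp: \<phi>_def)
  have "inj_on \<phi> A"
  proof (rule inj_onI)
    fix x y assume xy: "x \<in> A" "y \<in> A" "\<phi> x = \<phi> y"
    then have "f x = f y"
      using weight_\<phi> by metis
    then show "x = y"
      using xy bij_betw_imp_inj_on[OF h[of "f x"]] by (auto simp: \<phi>_def inj_on_def)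
  qed
  moreover have "\<phi> ` A = B"
  proof (intro equalityI subsetI)
    fix y assume "y \<in> B"
    then obtain x where "x \<in> A" "f x = g y" "y = h (g y) x"
      using bij_betw_imp_surj_on[OF h[of "g y"]] by blast
    then have "y = \<phi> x"
      by (simp add: \<phi>_def)
    then show "y \<in> \<phi> ` A"
      using \<open>x \<in> A\<close> by blast
  qed (use weight_\<phi> in blast)
  ultimately show ?thesis
    using weight_\<phi> by (auto simp: bij_betw_def)
qed

lemma exists_weight_halving_bij:
  fixes wA :: "'a \<Rightarrow> nat" and wB :: "'b \<Rightarrow> nat"
  assumes "finite_fibres A wA" "finite_fibres B wB"
    and even_part: "Abs_fps (\<lambda>n. gen_fun A wA $ (2*n)) = (gen_fun B wB :: 'c::semiring_char_0 fps)"
  shows "\<exists>\<phi>. bij_betw \<phi> {x\<in>A. even (wA x)} B \<and> (\<forall>x\<in>A. even (wA x) \<longrightarrow> 2 * wB (\<phi> x) = wA x)"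
proof -
  have fibre: "{x\<in>{x\<in>A. even (wA x)}. wA x div 2 = n} = {x\<in>A. wA x = 2*n}" for n
    by auto
  have "gen_fun A wA $ (2*n) = (gen_fun B wB :: 'c fps) $ n" for n
    using arg_cong[OF even_part, of "\<lambda>F. F $ n"] by simp
  then have "card {x\<in>{x\<in>A. even (wA x)}. wA x div 2 = n} = card {y\<in>B. wB y = n}" for n
    unfolding fibre by (simp add: gen_fun_def)
  moreover have "finite_fibres {x\<in>A. even (wA x)} (\<lambda>x. wA x div 2)"
    using assms(1) unfolding finite_fibres_def fibre by blast
  ultimately obtain \<phi> where "bij_betw \<phi> {x\<in>A. even (wA x)} B"
    and "\<forall>x\<in>{x\<in>A. even (wA x)}. wB (\<phi> x) = wA x div 2"
    using exists_weight_preserving_bij assms(2) by blast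
  then show ?thesis
    by auto
qed

section \<open>Partitions with no part repeated more than three times\<close>

lemma length_le_sum_list: "\<forall>x\<in>set xs. 0 < x \<Longrightarrow> length xs \<le> sum_list (xs :: nat list)"
  by (induction xs) auto

lemma finite_fibres_P3: "finite_fibres P3 weight"
  unfolding finite_fibres_def
proof
  fix n
  have "{xs\<in>P3. weight xs = n} \<subseteq> {xs. set xs \<subseteq> {0..n} \<and> length xs \<le> n}"
    by (auto simp: P3_def is_partition_def weight_def intro: member_le_sum_list
        dest: length_le_sum_list)
  moreover have "finite {xs. set xs \<subseteq> {0..n::nat} \<and> length xs \<le> n}"
    by (rule finite_lists_length_le) simp
  ultimately show "finite {xs\<in>P3. weight xs = n}"
    by (rule finite_subset)
qed

lemma finite_fibres_P3o: "finite_fibres P3o weight"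
  using finite_fibres_P3 by (rule finite_fibres_subset) (auto simp: P3o_def)

definition P3_bounded :: "(nat \<Rightarrow> bool) \<Rightarrow> nat \<Rightarrow> nat list set" where
  "P3_bounded P M = {xs\<in>P3. \<forall>x\<in>set xs. P x \<and> x \<le> M}"

lemma mem_P3_bounded_iff:
  "xs \<in> P3_bounded P M \<longleftrightarrow>
     sorted_wrt (\<ge>) xs \<and> (\<forall>k. count_list xs k \<le> 3) \<and> (\<forall>x\<in>set xs. 0 < x \<and> P x \<and> x \<le> M)"
  by (auto simp: P3_bounded_def P3_def is_partition_def)

lemma P3_bounded_0: "P3_bounded P 0 = {[]}"
  by (auto simp: mem_P3_bounded_iff) (metis list.set_intros(1) neq_Nil_conv not_less_zero)

lemma P3_bounded_Suc_skip: "\<not> P (Suc M) \<Longrightarrow> P3_bounded P (Suc M) = P3_bounded P M"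
  by (auto simp: P3_bounded_def le_Suc_eq)

lemma count_list_replicate: "count_list (replicate t m) k = (if k = m then t else 0)"
  by (induction t) auto

lemma count_list_filter_le: "count_list (filter P xs) k \<le> count_list xs k"
  by (induction xs) auto

lemma sorted_wrt_ge_split_max:
  fixes xs :: "nat list"
  assumes "sorted_wrt (\<ge>) xs" "\<forall>x\<in>set xs. x \<le> m"
  shows "xs = replicate (count_list xs m) m @ filter (\<lambda>x. x \<noteq> m) xs"
  using assms
proof (induction xs)
  case (Cons x xs)
  show ?case
  proof (cases "x = m")
    case False
    then have "\<forall>y\<in>set (x # xs). y < m" using Cons.prems by fastforce
    then have "m \<notin> set (x # xs)" "filter (\<lambda>x. x \<noteq> m) (x # xs) = x # xs"
      by (auto simp: filter_id_conv)
    then show ?thesis by simp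
  qed (use Cons in simp)
qed simp

lemma replicate_append_in_P3_bounded:
  assumes "t \<le> 3" "ys \<in> P3_bounded P M" "P (Suc M)"
  shows "replicate t (Suc M) @ ys \<in> P3_bounded P (Suc M)"
proof -
  have "Suc M \<notin> set ys"
    using assms(2) by (auto simp: mem_P3_bounded_iff)
  then have "count_list (replicate t (Suc M) @ ys) k \<le> 3" for k
    using assms(1,2) by (cases "k = Suc M") (auto simp: mem_P3_bounded_iff count_list_replicate)
  moreover have "sorted_wrt (\<ge>) (replicate t (Suc M) @ ys)"
    using assms(2) linorder.sorted_replicate[OF dual_linorder]
    by (auto simp: mem_P3_bounded_iff sorted_wrt_append)
  ultimately show ?thesis
    using assms(2,3) by (auto simp: mem_P3_bounded_iff)
qed

lemma filter_in_P3_bounded: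
  "xs \<in> P3_bounded P (Suc M) \<Longrightarrow> filter (\<lambda>x. x \<noteq> Suc M) xs \<in> P3_bounded P M"
  by (auto simp: mem_P3_bounded_iff sorted_wrt_filter le_Suc_eq intro: le_trans[OF count_list_filter_le])

lemma bij_betw_P3_bounded_Suc:
  assumes "P (Suc M)"
  shows "bij_betw (\<lambda>(t, ys). replicate t (Suc M) @ ys) ({..<4} \<times> P3_bounded P M) (P3_bounded P (Suc M))"
proof (rule bij_betw_imageI)
  show "inj_on (\<lambda>(t, ys). replicate t (Suc M) @ ys) ({..<4} \<times> P3_bounded P M)"
  proof (rule inj_onI, clarsimp)
    fix t ys t' ys'
    assume "ys \<in> P3_bounded P M" "ys' \<in> P3_bounded P M"
      and eq: "replicate t (Suc M) @ ys = replicate t' (Suc M) @ ys'"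
    then have "Suc M \<notin> set ys" "Suc M \<notin> set ys'"
      by (auto simp: mem_P3_bounded_iff)
    then have "t = t'"
      using arg_cong[OF eq, of "\<lambda>xs. count_list xs (Suc M)"] by (simp add: count_list_replicate)
    then show "t = t' \<and> ys = ys'"
      using eq by simp
  qed
  show "(\<lambda>(t, ys). replicate t (Suc M) @ ys) ` ({..<4} \<times> P3_bounded P M) = P3_bounded P (Suc M)"
  proof (intro equalityI subsetI)
    fix xs assume "xs \<in> (\<lambda>(t, ys). replicate t (Suc M) @ ys) ` ({..<4} \<times> P3_bounded P M)"
    then obtain t ys where "t < 4" "ys \<in> P3_bounded P M" "xs = replicate t (Suc M) @ ys"
      by auto
    then show "xs \<in> P3_bounded P (Suc M)"
      using replicate_append_in_P3_bounded[of t ys P M] assms by simp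
  next
    fix xs assume xs: "xs \<in> P3_bounded P (Suc M)"
    let ?t = "count_list xs (Suc M)" and ?ys = "filter (\<lambda>x. x \<noteq> Suc M) xs"
    have "xs = replicate ?t (Suc M) @ ?ys"
      using xs by (intro sorted_wrt_ge_split_max) (auto simp: mem_P3_bounded_iff)
    moreover have "?t \<le> 3"
      using xs by (simp add: mem_P3_bounded_iff)
    moreover have "?ys \<in> P3_bounded P M"
      using xs by (rule filter_in_P3_bounded)
    ultimately show "xs \<in> (\<lambda>(t, ys). replicate t (Suc M) @ ys) ` ({..<4} \<times> P3_bounded P M)"
      by (intro image_eqI[where x = "(?t, ?ys)"]) auto
  qed
qed

lemma weight_replicate_append: "weight (replicate t m @ ys) = t * m + weight ys"
  by (simp add: weight_def sum_list_replicate)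

lemma gen_fun_P3_bounded:
  "gen_fun (P3_bounded P M) weight = (\<Prod>k<M. if P (Suc k) then \<Sum>t<4. (q ^ Suc k) ^ t else 1)"
proof (induction M)
  case 0
  show ?case by (simp add: P3_bounded_0 gen_fun_finite weight_def)
next
  case (Suc M)
  show ?case
  proof (cases "P (Suc M)")
    case True
    have fibres: "finite_fibres (P3_bounded P M) weight"
      using finite_fibres_P3 by (rule finite_fibres_subset) (auto simp: P3_bounded_def)
    have "(gen_fun (P3_bounded P (Suc M)) weight :: rat fps)
        = gen_fun ({..<4} \<times> P3_bounded P M) (\<lambda>(t, ys). t * Suc M + weight ys)"
      using bij_betw_P3_bounded_Suc[of P M, OF True]
      by (rule gen_fun_bij_betw) (auto simp: weight_replicate_append)
    also have "\<dots> = gen_fun {..<4} (\<lambda>t. t * Suc M) * gen_fun (P3_bounded P M) weight"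
      by (rule gen_fun_Times[OF _ fibres]) (simp add: finite_fibres_def)
    also have "gen_fun {..<4} (\<lambda>t. t * Suc M) = (\<Sum>t<4. (q ^ Suc M) ^ t)"
      unfolding gen_fun_finite[OF finite_lessThan] by (simp only: mult.commute[of _ "Suc M"] power_mult)
    finally show ?thesis
      using True Suc.IH by (simp add: mult.commute)
  qed (simp add: P3_bounded_Suc_skip Suc.IH)
qed

lemma gen_fun_P3_bounded_mult:
  "gen_fun (P3_bounded P M) weight * (\<Prod>k<M. if P (Suc k) then 1 - q ^ Suc k else 1)
     = (\<Prod>k<M. if P (Suc k) then 1 - q ^ (4 * Suc k) else 1)"
proof -
  have geometric: "(\<Sum>t<4. (q ^ m) ^ t) * (1 - q ^ m) = 1 - q ^ (4 * m)" for m
  proof -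
    have "(\<Sum>t<4. (q ^ m) ^ t) * (1 - q ^ m) = 1 - (q ^ m) ^ 4"
      by (rule trans[OF mult.commute one_diff_power_eq [symmetric]])
    also have "(q ^ m) ^ 4 = q ^ (4 * m)"
      by (metis power_mult mult.commute)
    finally show ?thesis .
  qed
  then show ?thesis
    unfolding gen_fun_P3_bounded prod.distrib [symmetric]
    by (intro prod.cong refl) (simp add: geometric del: power_Suc mult_Suc_right)
qed

lemma fps_eq_upto_gen_fun_P3_bounded:
  assumes "N \<le> M"
  shows "fps_eq_upto N (gen_fun {xs\<in>P3. \<forall>x\<in>set xs. P x} weight) (gen_fun (P3_bounded P M) weight)"
proof (rule fps_eq_upto_gen_fun)
  fix xs :: "nat list"
  assume "weight xs \<le> N"
  then have "\<forall>x\<in>set xs. x \<le> M"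
    using assms member_le_sum_list[of _ xs] by (fastforce simp: weight_def)
  then show "xs \<in> {xs\<in>P3. \<forall>x\<in>set xs. P x} \<longleftrightarrow> xs \<in> P3_bounded P M"
    by (auto simp: P3_bounded_def)
qed

lemma gen_fun_P3: "gen_fun P3 weight * f_eta 1 = f_eta 4"
proof (rule fps_eq_upto_imp_eq)
  fix N
  have "fps_eq_upto N (gen_fun P3 weight * f_eta 1) (gen_fun (P3_bounded (\<lambda>_. True) N) weight * f_eta_partial 1 N)"
    using fps_eq_upto_gen_fun_P3_bounded[of N N "\<lambda>_. True"]
    by (intro fps_eq_upto_mult f_eta_eq_upto_partial) simp_all
  also have "\<dots> = f_eta_partial 4 N"
    using gen_fun_P3_bounded_mult[of "\<lambda>_. True" N] by (simp add: f_eta_partial_def)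
  also have "fps_eq_upto N \<dots> (f_eta 4)"
    by (intro fps_eq_upto_sym[OF f_eta_eq_upto_partial]) simp_all
  finally show "fps_eq_upto N (gen_fun P3 weight * f_eta 1) (f_eta 4)" .
qed

lemma gen_fun_P3o: "gen_fun P3o weight * f_eta 1 * f_eta 8 = f_eta 2 * f_eta 4"
proof (rule fps_eq_upto_imp_eq)
  fix N
  let ?G = "gen_fun (P3_bounded odd (2*N)) weight :: rat fps"
  have "P3o = {xs\<in>P3. \<forall>x\<in>set xs. odd x}"
    by (simp add: P3o_def)
  then have "fps_eq_upto N (gen_fun P3o weight * f_eta 1 * f_eta 8) (?G * f_eta_partial 1 (2*N) * f_eta_partial 8 N)"
    using fps_eq_upto_gen_fun_P3_bounded[of N "2*N" odd]
    by (intro fps_eq_upto_mult f_eta_eq_upto_partial) simp_all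
  also have "?G * f_eta_partial 1 (2*N) = (\<Prod>k<N. 1 - q ^ (4 * (2*k+1))) * f_eta_partial 2 N"
  proof -
    have "?G * (\<Prod>k<N. 1 - q ^ (2*k+1)) = (\<Prod>k<N. 1 - q ^ (4 * (2*k+1)))"
      using gen_fun_P3_bounded_mult[of odd "2*N"]
        prod_lessThan_double_odd[of "\<lambda>m. 1 - q ^ m" N] prod_lessThan_double_odd[of "\<lambda>m. 1 - q ^ (4 * m)" N]
      by simp
    then show ?thesis
      using f_eta_partial_double[of 1 N] by (simp add: mult.assoc)
  qed
  also have "(\<Prod>k<N. 1 - q ^ (4 * (2*k+1))) * f_eta_partial 2 N * f_eta_partial 8 N
      = f_eta_partial 2 N * f_eta_partial 4 (2*N)"
    using f_eta_partial_double[of 4 N] by (simp add: mult_ac)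
  also have "fps_eq_upto N \<dots> (f_eta 2 * f_eta 4)"
    by (intro fps_eq_upto_mult fps_eq_upto_sym[OF f_eta_eq_upto_partial]) simp_all
  finally show "fps_eq_upto N (gen_fun P3o weight * f_eta 1 * f_eta 8) (f_eta 2 * f_eta 4)" .
qed

lemma GF_eq_gen_fun_P3o_P3: "GF = gen_fun P3o weight * gen_fun P3 weight"
proof -
  have "gen_fun P3 weight = gen_fun P3 weight * f_eta 1 * inverse (f_eta 1)"
    by (simp add: mult.assoc)
  also have "\<dots> = f_eta 4 * inverse (f_eta 1)"
    by (simp only: gen_fun_P3)
  finally have P3: "gen_fun P3 weight = f_eta 4 * inverse (f_eta 1)" .
  have "gen_fun P3o weight = gen_fun P3o weight * f_eta 1 * f_eta 8 * inverse (f_eta 1) * inverse (f_eta 8)"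
    by (simp add: mult.assoc mult.left_commute[of "f_eta 8"])
  also have "\<dots> = f_eta 2 * f_eta 4 * inverse (f_eta 1) * inverse (f_eta 8)"
    by (simp only: gen_fun_P3o)
  finally show ?thesis
    by (simp add: P3 GF_f_eta_product power2_eq_square mult_ac)
qed

lemma finite_fibres_P3o_P3:
  "finite_fibres (P3o \<times> P3) (\<lambda>(a, b). weight a + weight b)"
  by (intro finite_fibres_Times finite_fibres_P3o finite_fibres_P3)

lemma gen_fun_P3o_P3: "gen_fun (P3o \<times> P3) (\<lambda>(a, b). weight a + weight b) = GF"
  by (simp add: gen_fun_Times finite_fibres_P3o finite_fibres_P3 GF_eq_gen_fun_P3o_P3)

lemma
  shows finite_fibres_P3o_P3o_P3_P3:
      "finite_fibres (P3o \<times> P3o \<times> P3 \<times> P3) (\<lambda>(c, d, e, g). weight c + weight d + weight e + weight g)"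
    and gen_fun_P3o_P3o_P3_P3:
      "gen_fun (P3o \<times> P3o \<times> P3 \<times> P3) (\<lambda>(c, d, e, g). weight c + weight d + weight e + weight g) = GF\<^sup>2"
proof -
  have w4: "(\<lambda>(c, d, e, g). weight c + weight d + weight e + weight g)
      = (\<lambda>(c, r). weight c + (\<lambda>(d, s). weight d + (\<lambda>(e, g). weight e + weight g) s) r)"
    by (auto simp: fun_eq_iff)
  have fibres: "finite_fibres (P3 \<times> P3) (\<lambda>(e, g). weight e + weight g)"
    "finite_fibres (P3o \<times> P3 \<times> P3) (\<lambda>(d, s). weight d + (\<lambda>(e, g). weight e + weight g) s)"
    by (intro finite_fibres_Times finite_fibres_P3o finite_fibres_P3)+
  show "finite_fibres (P3o \<times> P3o \<times> P3 \<times> P3) (\<lambda>(c, d, e, g). weight c + weight d + weight e + weight g)"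
    unfolding w4 by (intro finite_fibres_Times finite_fibres_P3o fibres)
  show "gen_fun (P3o \<times> P3o \<times> P3 \<times> P3) (\<lambda>(c, d, e, g). weight c + weight d + weight e + weight g) = GF\<^sup>2"
    unfolding w4 using fibres
    by (simp add: gen_fun_Times finite_fibres_P3o finite_fibres_P3 GF_eq_gen_fun_P3o_P3
        power2_eq_square mult_ac)
qed

lemma Pcoef_2_convolutive: "Abs_fps (\<lambda>n. Pcoef (2 * n)) = (Abs_fps Pcoef) ^ 2"
proof -
  have "Abs_fps Pcoef = GF"
    by (rule fps_ext) (simp add: Pcoef_def)
  then show ?thesis
    using GF_even_part by (simp add: Pcoef_def)
qed

theorem theorem2p11:
  shows "(\<exists>\<phi> :: nat list \<times> nat list \<Rightarrow> nat list \<times> nat list \<times> nat list \<times> nat list.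
            bij_betw \<phi> {(a, b). a \<in> P3o \<and> b \<in> P3 \<and> even (weight a + weight b)}
                       (P3o \<times> P3o \<times> P3 \<times> P3)
          \<and> (\<forall>a b. a \<in> P3o \<and> b \<in> P3 \<and> even (weight a + weight b) \<longrightarrow>
                (case \<phi> (a, b) of (c, d, e, g) \<Rightarrow>
                   2 * (weight c + weight d + weight e + weight g) = weight a + weight b)))
       \<and> Abs_fps (\<lambda>n. Pcoef (2 * n)) = (Abs_fps Pcoef) ^ 2"
proof -
  let ?w2 = "\<lambda>(a, b). weight a + weight b"
  let ?w4 = "\<lambda>(c, d, e, g). weight c + weight d + weight e + weight g"
  have "Abs_fps (\<lambda>n. gen_fun (P3o \<times> P3) ?w2 $ (2*n)) = (gen_fun (P3o \<times> P3o \<times> P3 \<times> P3) ?w4 :: rat fps)"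
    by (simp add: gen_fun_P3o_P3 gen_fun_P3o_P3o_P3_P3 GF_even_part)
  then obtain \<phi> where bij: "bij_betw \<phi> {x\<in>P3o \<times> P3. even (?w2 x)} (P3o \<times> P3o \<times> P3 \<times> P3)"
    and halving: "\<forall>x\<in>P3o \<times> P3. even (?w2 x) \<longrightarrow> 2 * ?w4 (\<phi> x) = ?w2 x"
    using exists_weight_halving_bij[OF finite_fibres_P3o_P3 finite_fibres_P3o_P3o_P3_P3] by blast
  have "{(a, b). a \<in> P3o \<and> b \<in> P3 \<and> even (weight a + weight b)} = {x\<in>P3o \<times> P3. even (?w2 x)}"
    by auto
  moreover have "case \<phi> (a, b) of (c, d, e, g) \<Rightarrow>
      2 * (weight c + weight d + weight e + weight g) = weight a + weight b"
    if "a \<in> P3o \<and> b \<in> P3 \<and> even (weight a + weight b)" for a b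
    using halving[rule_format, of "(a, b)"] that by (cases "\<phi> (a, b)") simp
  ultimately show ?thesis
    using bij Pcoef_2_convolutive by auto
qed

end
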